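(* Let $W>0$ and define $C(x)=W\log_2(1+x)$ for $x\ge 0$. Consider a monitoring receiver that simultaneously receives, over a two-user Gaussian multiple access channel, a transmission from an announcer $A$ with fixed rate $R_A\ge 0$ and received SNR $\gamma_A\ge 0$, and a downlink transmission from a base station $B$ with received SNR $\gamma_B\ge 0$. Let $\Gamma_A=C^{-1}(R_A)=2^{R_A/W}-1$. Suppose $B$ knows $R_A$ and $\gamma_B$ (but not $\gamma_A$) and selects its rate as $R_B=C(\Gamma_B)$ with $\Gamma_B=\frac{\gamma_B}{1+\Gamma_A}$. Then the decodability of $A$'s transmission depends solely on whether $R_A\le C(\gamma_A)$ (equivalently $\gamma_A\ge\Gamma_A$): whenever $R_A\le C(\gamma_A)$, the rate pair $(R_A,R_B)$ satisfies all three multiple access channel inequalities $$R_A\le C(\gamma_A),\qquad R_B\le C(\gamma_B),\qquad R_A+R_B\le C(\gamma_A+\gamma_B),$$ so both transmissions can be decoded, while if $R_A> C(\gamma_A)$ the transmission of $A$ cannot be decoded.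
   Context: Decoding is in the information-theoretic sense with Gaussian codebooks: the transmission of $A$ is decodable at the receiver either by first decoding $B$ treating $A$ as noise, subtracting it, and then decoding $A$ in noise (possible iff $R_A\le C(\gamma_A)$), or by joint decoding of both transmissions, which is possible iff all three multiple access channel inequalities above hold. *)

theory Defs
  imports Complex_Main
begin

definition cap :: "real \<Rightarrow> real \<Rightarrow> real" where
  "cap W x = W * log 2 (1 + x)"

definition mac_ok :: "real \<Rightarrow> real \<Rightarrow> real \<Rightarrow> real \<Rightarrow> real \<Rightarrow> bool" where
  "mac_ok W RA RB gA gB \<longleftrightarrow>
     RA \<le> cap W gA \<and> RB \<le> cap W gB \<and> RA + RB \<le> cap W (gA + gB)"

text \<open>Decodability of A: either by successive interference cancellation
  (decode B treating A as noise, then A in noise, possible iff RA <= C(gA)),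
  or by joint decoding (possible iff all MAC inequalities hold).\<close>
definition decodable_A :: "real \<Rightarrow> real \<Rightarrow> real \<Rightarrow> real \<Rightarrow> real \<Rightarrow> bool" where
  "decodable_A W RA RB gA gB \<longleftrightarrow> RA \<le> cap W gA \<or> mac_ok W RA RB gA gB"

end

theory Submission
  imports Defs
begin

text \<open>B's rate is the largest one that leaves A's threshold SNR \<open>\<Gamma>\<^sub>A\<close> exactly sufficient
  after successive interference cancellation: the capacity chain rule
  \<open>C(a) + C(b/(1+a)) = C(a+b)\<close> gives \<open>R\<^sub>A + R\<^sub>B = C(\<Gamma>\<^sub>A + \<gamma>\<^sub>B)\<close>, so the sum-rate
  constraint reduces to \<open>\<Gamma>\<^sub>A \<le> \<gamma>\<^sub>A\<close>, i.e. to A's own single-user constraint.\<close>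

lemma cap_le_cap_iff:
  assumes "W > 0" and "x > -1" and "y > -1"
  shows "cap W x \<le> cap W y \<longleftrightarrow> x \<le> y"
  using assms by (simp add: cap_def)

lemma cap_powr_minus_one:
  assumes "W > 0"
  shows "cap W (2 powr (R / W) - 1) = R"
  using assms by (simp add: cap_def)

lemma cap_add_chain_rule:
  assumes "a > -1" and "b \<ge> 0"
  shows "cap W a + cap W (b / (1 + a)) = cap W (a + b)"
proof -
  have pos: "1 + a > 0" "1 + b / (1 + a) > 0"
    using assms by (auto intro: add_pos_nonneg)
  have "(1 + a) * (1 + b / (1 + a)) = 1 + (a + b)"
    using pos(1) by (simp add: field_simps)
  then show ?thesis
    using pos by (simp add: cap_def log_mult_pos[symmetric] distrib_left[symmetric])
qed

lemma decodable_A_iff: "decodable_A W RA RB gA gB \<longleftrightarrow> RA \<le> cap W gA"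
  unfolding decodable_A_def mac_ok_def by auto

theorem corollary1:
  fixes W RA gA gB :: real
  assumes "W > 0" and "RA \<ge> 0" and "gA \<ge> 0" and "gB \<ge> 0"
  defines "GA \<equiv> 2 powr (RA / W) - 1"
  defines "GB \<equiv> gB / (1 + GA)"
  defines "RB \<equiv> cap W GB"
  shows "(decodable_A W RA RB gA gB \<longleftrightarrow> RA \<le> cap W gA)
       \<and> (RA \<le> cap W gA \<longleftrightarrow> gA \<ge> GA)
       \<and> (RA \<le> cap W gA \<longrightarrow> mac_ok W RA RB gA gB)
       \<and> (RA > cap W gA \<longrightarrow> \<not> decodable_A W RA RB gA gB)"
proof -
  have RA_eq: "RA = cap W GA"
    unfolding GA_def using assms(1) by (simp add: cap_powr_minus_one)
  have GA_nonneg: "GA \<ge> 0"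
    unfolding GA_def using assms(1,2) by (simp add: ge_one_powr_ge_zero)
  have threshold: "RA \<le> cap W gA \<longleftrightarrow> gA \<ge> GA"
    unfolding RA_eq using assms(1,3) GA_nonneg by (simp add: cap_le_cap_iff)
  have sum_rate: "RA + RB = cap W (GA + gB)"
    unfolding RA_eq RB_def GB_def using GA_nonneg assms(4) by (simp add: cap_add_chain_rule)
  have "mac_ok W RA RB gA gB" if "RA \<le> cap W gA"
  proof -
    have "0 \<le> GB" "GB \<le> gB"
      unfolding GB_def using GA_nonneg assms(4) by (simp_all add: divide_le_eq mult_le_cancel_left1)
    then have "RB \<le> cap W gB"
      unfolding RB_def using assms(1) by (simp add: cap_le_cap_iff)
    moreover have "RA + RB \<le> cap W (gA + gB)"
      unfolding sum_rate using that threshold GA_nonneg assms(1,3,4) by (simp add: cap_le_cap_iff)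
    ultimately show ?thesis
      unfolding mac_ok_def using that by simp
  qed
  then show ?thesis
    using threshold by (auto simp: decodable_A_iff)
qed

end
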